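(* Let $\gamma\in\mathcal{K}^{\mathcal{P}^{-1}}$ and $\Psi\in\mathcal{K}_{\mathrm{FxT}}$. Then there exist $\lambda\ge1$ and $\tilde\Psi\in\mathcal{K}_{\mathrm{FxT}}$ such that $\lambda\gamma^{\lambda-1}(s)\gamma'(s)\Psi(s)\ge\tilde\Psi(\gamma^\lambda(s))$ for all $s>0$.
   Context: $\mathcal{K}_\infty$ is the set of continuous strictly increasing unbounded $\alpha:\mathbb{R}_{\ge0}\to\mathbb{R}_{\ge0}$ with $\alpha(0)=0$. $\mathcal{K}^{\mathcal{P}}$ is the set of $\alpha\in\mathcal{K}_\infty$ of the form $\alpha(s)=\sum_{i=1}^nc_is^{p_i}$ with real $c_i\neq0$, $p_i>0$, and $\alpha'(s)>0$ for all $s>0$. $\mathcal{K}^{\mathcal{P}^{-1}}$ is the set of $\alpha\in\mathcal{K}_\infty$ with $\alpha^{-1}\in\mathcal{K}^{\mathcal{P}}$. $\mathcal{K}_{\mathrm{FxT}}$ is the set of functions $c_1s^{p_1}+c_2s^{p_2}$ with $c_1,c_2>0$, $p_1\in(0,1)$, $p_2>1$. $\gamma^\lambda(s)$ denotes $(\gamma(s))^\lambda$. *)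

theory Defs
  imports "HOL-Analysis.Analysis"
begin

text \<open>Functions on the nonnegative reals are represented as real \<Rightarrow> real;
only their values on {0..} matter.\<close>

definition K_inf :: "(real \<Rightarrow> real) \<Rightarrow> bool" where
  "K_inf \<alpha> \<longleftrightarrow> continuous_on {0..} \<alpha> \<and> strict_mono_on {0..} \<alpha> \<and> \<alpha> 0 = 0
     \<and> (\<forall>s\<ge>0. \<alpha> s \<ge> 0) \<and> (\<forall>M. \<exists>s\<ge>0. \<alpha> s > M)"

definition K_P :: "(real \<Rightarrow> real) \<Rightarrow> bool" where
  "K_P \<alpha> \<longleftrightarrow> K_inf \<alpha> \<and>
     (\<exists>(n::nat) (c::nat \<Rightarrow> real) (p::nat \<Rightarrow> real).
        (\<forall>i<n. c i \<noteq> 0 \<and> p i > 0) \<and> (\<forall>s\<ge>0. \<alpha> s = (\<Sum>i<n. c i * s powr p i))) \<and>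
     (\<forall>s>0. \<alpha> differentiable at s \<and> deriv \<alpha> s > 0)"

definition K_P_inv :: "(real \<Rightarrow> real) \<Rightarrow> bool" where
  "K_P_inv \<alpha> \<longleftrightarrow> K_inf \<alpha> \<and>
     (\<exists>\<beta>. K_P \<beta> \<and> (\<forall>s\<ge>0. \<beta> (\<alpha> s) = s) \<and> (\<forall>s\<ge>0. \<alpha> (\<beta> s) = s))"

definition K_FxT :: "(real \<Rightarrow> real) \<Rightarrow> bool" where
  "K_FxT \<Psi> \<longleftrightarrow> (\<exists>c1 c2 p1 p2. c1 > 0 \<and> c2 > 0 \<and> 0 < p1 \<and> p1 < 1 \<and> p2 > 1 \<and>
     (\<forall>s\<ge>0. \<Psi> s = c1 * s powr p1 + c2 * s powr p2))"

end

theory Submission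
  imports Defs
begin

text \<open>Take \<open>\<lambda> = 1\<close> and let \<open>\<beta>\<close> be the inverse of \<open>\<gamma>\<close>, a finite sum \<open>\<Sum>\<^sub>e d\<^sub>e t powr e\<close>
with positive exponents which, after merging equal exponents, has nonzero coefficients.
Substituting \<open>t = \<gamma> s\<close> and \<open>\<gamma>' s = 1 / \<beta>' t\<close>, the claim becomes \<open>\<Psi>' t \<le> \<Psi> (\<beta> t) / \<beta>' t\<close>
for \<open>t > 0\<close>. Near \<open>0\<close>, \<open>\<beta>\<close> and \<open>\<beta>'\<close> behave like their terms of lowest exponent \<open>e\<close>, so
\<open>c\<^sub>1 \<beta> powr q\<^sub>1 / \<beta>'\<close> is at least a multiple of \<open>t powr (e (q\<^sub>1 - 1) + 1)\<close>, an exponent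
below \<open>1\<close>; near \<open>\<infinity>\<close> the highest exponent gives the analogous bound for
\<open>c\<^sub>2 \<beta> powr q\<^sub>2 / \<beta>'\<close> with an exponent above \<open>1\<close>. In between, the quotient is continuous
and positive, hence bounded below on compact intervals, and the three bounds glue to a
single \<open>a t powr r\<^sub>1 + a t powr r\<^sub>2\<close>.\<close>

lemma powr_sum_regroup_exponents:
  fixes c p :: "nat \<Rightarrow> real"
  assumes "\<forall>i<n. p i > 0"
  shows "\<exists>E d. finite E \<and> (\<forall>e\<in>E. e > 0 \<and> d e \<noteq> 0) \<and>
           (\<forall>t. (\<Sum>i<n. c i * t powr p i) = (\<Sum>e\<in>E. d e * t powr e))"
proof -
  define P where "P = p ` {..<n}"
  define d where "d e = (\<Sum>i\<in>{i\<in>{..<n}. p i = e}. c i)" for e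
  define E where "E = {e\<in>P. d e \<noteq> 0}"
  have "finite P" by (simp add: P_def)
  have "(\<Sum>i<n. c i * t powr p i) = (\<Sum>e\<in>E. d e * t powr e)" for t
  proof -
    have "(\<Sum>i<n. c i * t powr p i) = (\<Sum>e\<in>P. \<Sum>i\<in>{i\<in>{..<n}. p i = e}. c i * t powr p i)"
      unfolding P_def by (rule sum.image_gen) simp
    also have "\<dots> = (\<Sum>e\<in>P. d e * t powr e)"
      unfolding d_def sum_distrib_right by (intro sum.cong refl) auto
    also have "\<dots> = (\<Sum>e\<in>E. d e * t powr e)"
      using \<open>finite P\<close> by (intro sum.mono_neutral_right) (auto simp: E_def)
    finally show ?thesis .
  qed
  moreover have "finite E" using \<open>finite P\<close> by (simp add: E_def)
  moreover have "\<forall>e\<in>E. e > 0 \<and> d e \<noteq> 0" using assms by (auto simp: E_def P_def)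
  ultimately show ?thesis by blast
qed

lemma tendsto_powr_sum_at_right_0:
  fixes g :: "real \<Rightarrow> real"
  assumes "finite E" "E \<noteq> {}"
  shows "((\<lambda>t. (\<Sum>e\<in>E. g e * t powr (e - k)) / t powr (Min E - k)) \<longlongrightarrow> g (Min E)) (at_right 0)"
proof -
  have "((\<lambda>t. \<Sum>e\<in>E. g e * t powr (e - Min E)) \<longlongrightarrow> (\<Sum>e\<in>E. g e * (if e = Min E then 1 else 0)))
          (at_right 0)"
  proof (intro tendsto_sum tendsto_mult tendsto_const)
    fix e assume "e \<in> E"
    then consider "e = Min E" | "e > Min E" using assms by (metis Min_le order_le_less)
    then show "((\<lambda>t. t powr (e - Min E)) \<longlongrightarrow> (if e = Min E then 1 else 0)) (at_right (0::real))"
    proof cases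
      case 1
      have "\<forall>\<^sub>F t in at_right (0::real). 1 = t powr (e - Min E)"
        using eventually_at_right_less[of 0] by eventually_elim (simp add: 1)
      then show ?thesis using 1 by (simp add: tendsto_eventually)
    next
      case 2
      then show ?thesis
        by (auto intro!: tendsto_zero_powrI tendsto_ident_at eventually_at_right_less[THEN eventually_mono])
    qed
  qed
  moreover have "(\<Sum>e\<in>E. g e * (if e = Min E then 1 else 0)) = g (Min E)"
    using assms by (simp add: if_distrib sum.delta' cong: if_cong)
  moreover have "\<forall>\<^sub>F t in at_right 0.
      (\<Sum>e\<in>E. g e * t powr (e - Min E)) = (\<Sum>e\<in>E. g e * t powr (e - k)) / t powr (Min E - k)"
    using eventually_at_right_less[of 0]
  proof eventually_elim
    case (elim t)
    have "g e * t powr (e - k) / t powr (Min E - k) = g e * t powr (e - Min E)" for e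
      using elim by (simp add: powr_diff field_simps)
    then show ?case by (simp add: sum_divide_distrib)
  qed
  ultimately show ?thesis by (simp add: tendsto_cong)
qed

lemma tendsto_powr_sum_at_top:
  fixes g :: "real \<Rightarrow> real"
  assumes "finite E" "E \<noteq> {}"
  shows "((\<lambda>t. (\<Sum>e\<in>E. g e * t powr (e - k)) / t powr (Max E - k)) \<longlongrightarrow> g (Max E)) at_top"
proof -
  have "((\<lambda>t. \<Sum>e\<in>E. g e * t powr (e - Max E)) \<longlongrightarrow> (\<Sum>e\<in>E. g e * (if e = Max E then 1 else 0)))
          at_top"
  proof (intro tendsto_sum tendsto_mult tendsto_const)
    fix e assume "e \<in> E"
    then consider "e = Max E" | "e < Max E" using assms by (metis Max_ge order_le_less)
    then show "((\<lambda>t. t powr (e - Max E)) \<longlongrightarrow> (if e = Max E then 1 else 0)) (at_top :: real filter)"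
    proof cases
      case 1
      have "\<forall>\<^sub>F t in at_top. 1 = (t::real) powr (e - Max E)"
        using eventually_gt_at_top[of 0] by eventually_elim (simp add: 1)
      then show ?thesis using 1 by (simp add: tendsto_eventually)
    next
      case 2
      then show ?thesis by (auto intro!: tendsto_neg_powr filterlim_ident)
    qed
  qed
  moreover have "(\<Sum>e\<in>E. g e * (if e = Max E then 1 else 0)) = g (Max E)"
    using assms by (simp add: if_distrib sum.delta' cong: if_cong)
  moreover have "\<forall>\<^sub>F t in at_top.
      (\<Sum>e\<in>E. g e * t powr (e - Max E)) = (\<Sum>e\<in>E. g e * t powr (e - k)) / t powr (Max E - k)"
    using eventually_gt_at_top[of 0]
  proof eventually_elim
    case (elim t)
    have "g e * t powr (e - k) / t powr (Max E - k) = g e * t powr (e - Max E)" for e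
      using elim by (simp add: powr_diff field_simps)
    then show ?case by (simp add: sum_divide_distrib)
  qed
  ultimately show ?thesis by (simp add: tendsto_cong)
qed

lemma powr_sum_has_real_derivative:
  fixes \<beta> d :: "real \<Rightarrow> real"
  assumes "\<forall>t\<ge>0. \<beta> t = (\<Sum>e\<in>E. d e * t powr e)" "t > 0"
  shows "(\<beta> has_real_derivative (\<Sum>e\<in>E. d e * e * t powr (e - 1))) (at t)"
proof -
  have "((\<lambda>x. \<Sum>e\<in>E. d e * x powr e) has_real_derivative (\<Sum>e\<in>E. d e * (e * t powr (e - 1)))) (at t)"
    using assms(2) by (intro DERIV_sum DERIV_cmult has_real_derivative_powr)
  then have "(\<beta> has_real_derivative (\<Sum>e\<in>E. d e * (e * t powr (e - 1)))) (at t)"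
    by (rule has_field_derivative_transform_within_open[where S="{0<..}"]) (use assms in auto)
  then show ?thesis by (simp add: mult.assoc)
qed

lemma powr_sum_asymp_at_right_0:
  fixes \<beta> d :: "real \<Rightarrow> real"
  assumes fin: "finite E" "E \<noteq> {}" and coeffs: "\<forall>e\<in>E. e > 0 \<and> d e \<noteq> 0"
    and rep: "\<forall>t\<ge>0. \<beta> t = (\<Sum>e\<in>E. d e * t powr e)" and pos: "\<And>t. t > 0 \<Longrightarrow> \<beta> t > 0"
  shows "d (Min E) > 0"
    and "((\<lambda>t. \<beta> t / t powr Min E) \<longlongrightarrow> d (Min E)) (at_right 0)"
    and "((\<lambda>t. deriv \<beta> t / t powr (Min E - 1)) \<longlongrightarrow> d (Min E) * Min E) (at_right 0)"
proof -
  have "\<forall>\<^sub>F t in at_right 0. (\<Sum>e\<in>E. d e * t powr (e - 0)) / t powr (Min E - 0) = \<beta> t / t powr Min E"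
    using eventually_at_right_less[of 0] by eventually_elim (simp add: rep)
  from tendsto_cong[OF this] tendsto_powr_sum_at_right_0[OF fin, of d 0]
  show lim: "((\<lambda>t. \<beta> t / t powr Min E) \<longlongrightarrow> d (Min E)) (at_right 0)" by simp
  have "\<forall>\<^sub>F t in at_right 0.
      (\<Sum>e\<in>E. d e * e * t powr (e - 1)) / t powr (Min E - 1) = deriv \<beta> t / t powr (Min E - 1)"
    using eventually_at_right_less[of 0]
    by eventually_elim (simp add: DERIV_imp_deriv[OF powr_sum_has_real_derivative[OF rep]])
  from tendsto_cong[OF this] tendsto_powr_sum_at_right_0[OF fin, of "\<lambda>e. d e * e" 1]
  show "((\<lambda>t. deriv \<beta> t / t powr (Min E - 1)) \<longlongrightarrow> d (Min E) * Min E) (at_right 0)" by simp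
  have "\<forall>\<^sub>F t in at_right 0. 0 \<le> \<beta> t / t powr Min E"
    using eventually_at_right_less[of 0] by eventually_elim (use pos in \<open>simp add: less_imp_le\<close>)
  then have "d (Min E) \<ge> 0" by (rule tendsto_lowerbound[OF lim]) simp
  moreover have "d (Min E) \<noteq> 0" using coeffs fin by simp
  ultimately show "d (Min E) > 0" by simp
qed

lemma powr_sum_asymp_at_top:
  fixes \<beta> d :: "real \<Rightarrow> real"
  assumes fin: "finite E" "E \<noteq> {}" and coeffs: "\<forall>e\<in>E. e > 0 \<and> d e \<noteq> 0"
    and rep: "\<forall>t\<ge>0. \<beta> t = (\<Sum>e\<in>E. d e * t powr e)" and pos: "\<And>t. t > 0 \<Longrightarrow> \<beta> t > 0"
  shows "d (Max E) > 0"
    and "((\<lambda>t. \<beta> t / t powr Max E) \<longlongrightarrow> d (Max E)) at_top"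
    and "((\<lambda>t. deriv \<beta> t / t powr (Max E - 1)) \<longlongrightarrow> d (Max E) * Max E) at_top"
proof -
  have "\<forall>\<^sub>F t in at_top. (\<Sum>e\<in>E. d e * t powr (e - 0)) / t powr (Max E - 0) = \<beta> t / t powr Max E"
    using eventually_gt_at_top[of 0] by eventually_elim (simp add: rep)
  from tendsto_cong[OF this] tendsto_powr_sum_at_top[OF fin, of d 0]
  show lim: "((\<lambda>t. \<beta> t / t powr Max E) \<longlongrightarrow> d (Max E)) at_top" by simp
  have "\<forall>\<^sub>F t in at_top.
      (\<Sum>e\<in>E. d e * e * t powr (e - 1)) / t powr (Max E - 1) = deriv \<beta> t / t powr (Max E - 1)"
    using eventually_gt_at_top[of 0]
    by eventually_elim (simp add: DERIV_imp_deriv[OF powr_sum_has_real_derivative[OF rep]])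
  from tendsto_cong[OF this] tendsto_powr_sum_at_top[OF fin, of "\<lambda>e. d e * e" 1]
  show "((\<lambda>t. deriv \<beta> t / t powr (Max E - 1)) \<longlongrightarrow> d (Max E) * Max E) at_top" by simp
  have "\<forall>\<^sub>F t in at_top. 0 \<le> \<beta> t / t powr Max E"
    using eventually_gt_at_top[of 0] by eventually_elim (use pos in \<open>simp add: less_imp_le\<close>)
  then have "d (Max E) \<ge> 0" by (rule tendsto_lowerbound[OF lim]) simp
  moreover have "d (Max E) \<noteq> 0" using coeffs fin by simp
  ultimately show "d (Max E) > 0" by simp
qed

lemma eventually_powr_le_powr_div:
  fixes f g :: "real \<Rightarrow> real"
  assumes f: "((\<lambda>t. f t / t powr e) \<longlongrightarrow> A) F" and g: "((\<lambda>t. g t / t powr (e - 1)) \<longlongrightarrow> B) F"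
    and "A > 0" "B > 0" "c > 0" "q > 0" and "\<forall>\<^sub>F t in F. t > 0"
  shows "\<exists>K>0. \<forall>\<^sub>F t in F. K * t powr (e * q - e + 1) \<le> c * f t powr q / g t"
proof -
  define K where "K = c * (A / 2) powr q / (2 * B)"
  have "\<forall>\<^sub>F t in F. A / 2 < f t / t powr e"
    using order_tendstoD(1)[OF f, of "A / 2"] \<open>A > 0\<close> by linarith
  moreover have "\<forall>\<^sub>F t in F. 0 < g t / t powr (e - 1) \<and> g t / t powr (e - 1) < 2 * B"
    using order_tendstoD[OF g] \<open>B > 0\<close> by (simp add: eventually_conj)
  ultimately have "\<forall>\<^sub>F t in F. K * t powr (e * q - e + 1) \<le> c * f t powr q / g t"
    using \<open>\<forall>\<^sub>F t in F. t > 0\<close>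
  proof eventually_elim
    case (elim t)
    then have f_ge: "A / 2 * t powr e \<le> f t" and g_le: "g t \<le> 2 * B * t powr (e - 1)"
      and "g t > 0"
      using assms by (simp_all add: field_simps)
    have "(A / 2 * t powr e) powr q = (A / 2) powr q * t powr (e * q)"
      using \<open>A > 0\<close> \<open>t > 0\<close> by (simp add: powr_mult[of "A / 2"] powr_powr del: times_divide_eq_left)
    then have "K * t powr (e * q - e + 1) = c * (A / 2 * t powr e) powr q / (2 * B * t powr (e - 1))"
      using \<open>t > 0\<close> by (simp add: K_def powr_diff powr_add field_simps)
    also have "\<dots> \<le> c * f t powr q / (2 * B * t powr (e - 1))"
      using assms \<open>t > 0\<close> f_ge by (intro divide_right_mono mult_left_mono powr_mono2) auto
    also have "\<dots> \<le> c * f t powr q / g t"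
      using \<open>g t > 0\<close> \<open>c > 0\<close> g_le by (intro divide_left_mono) auto
    finally show ?case .
  qed
  moreover have "K > 0" using assms by (simp add: K_def)
  ultimately show ?thesis by blast
qed

lemma continuous_on_pos_lower_bound:
  fixes F :: "real \<Rightarrow> real"
  assumes "continuous_on {a..b} F" "\<forall>t\<in>{a..b}. F t > 0"
  obtains m where "m > 0" "\<forall>t\<in>{a..b}. m \<le> F t"
proof (cases "a \<le> b")
  case True
  then obtain t0 where "t0 \<in> {a..b}" "\<forall>t\<in>{a..b}. F t0 \<le> F t"
    using continuous_attains_inf[OF compact_Icc _ assms(1)] by auto
  with assms(2) show thesis by (intro that[of "F t0"]) auto
qed (auto intro: that[of 1])

lemma K_FxT_below_piecewise:
  fixes F :: "real \<Rightarrow> real"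
  assumes b: "0 < b" "b \<le> 1" and N: "1 \<le> N"
    and "K0 > 0" "x0 < 1" "K1 > 0" "x1 > 1" "m > 0"
    and below_b: "\<And>t. 0 < t \<Longrightarrow> t < b \<Longrightarrow> K0 * t powr x0 \<le> F t"
    and between: "\<And>t. b \<le> t \<Longrightarrow> t \<le> N \<Longrightarrow> m \<le> F t"
    and above_N: "\<And>t. N \<le> t \<Longrightarrow> K1 * t powr x1 \<le> F t"
  shows "\<exists>\<Psi>. K_FxT \<Psi> \<and> (\<forall>t>0. \<Psi> t \<le> F t)"
proof -
  define r1 where "r1 = max (1 / 2) x0"
  define r2 where "r2 = min 2 x1"
  define S where "S = N powr r1 + N powr r2"
  define a where "a = min (min K0 K1) (m / S) / 2"
  have r: "0 < r1" "r1 < 1" "1 < r2" "x0 \<le> r1" "r1 \<le> r2" "r2 \<le> x1"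
    using \<open>x0 < 1\<close> \<open>x1 > 1\<close> by (auto simp: r1_def r2_def)
  have "S > 0" using N by (simp add: S_def add_pos_pos)
  then have a: "a > 0" "2 * a \<le> K0" "2 * a \<le> K1" "2 * a \<le> m / S"
    using \<open>K0 > 0\<close> \<open>K1 > 0\<close> \<open>m > 0\<close> by (simp_all add: a_def)
  have "a * t powr r1 + a * t powr r2 \<le> F t" if "t > 0" for t
  proof -
    consider "t < b" | "b \<le> t" "t \<le> N" | "N \<le> t" by linarith
    then show ?thesis
    proof cases
      case 1
      then have "t powr r1 \<le> t powr x0" "t powr r2 \<le> t powr x0"
        using b r \<open>t > 0\<close> by (auto intro: powr_mono')
      then have "a * t powr r1 + a * t powr r2 \<le> 2 * a * t powr x0"
        using a(1) by (simp add: mult_left_mono add_mono flip: mult_2 distrib_left)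
      also have "\<dots> \<le> K0 * t powr x0" using a by (intro mult_right_mono) simp_all
      also have "\<dots> \<le> F t" using below_b[OF \<open>t > 0\<close> 1] .
      finally show ?thesis .
    next
      case 2
      then have "t powr r1 \<le> N powr r1" "t powr r2 \<le> N powr r2"
        using r \<open>t > 0\<close> by (auto intro: powr_mono2)
      then have "a * t powr r1 + a * t powr r2 \<le> a * S"
        using a(1) by (simp add: S_def distrib_left add_mono)
      also have "\<dots> \<le> 2 * a * S" using a(1) \<open>S > 0\<close> by simp
      also have "\<dots> \<le> m" using a(4) \<open>S > 0\<close> by (simp add: pos_le_divide_eq)
      also have "\<dots> \<le> F t" using between[OF 2] .
      finally show ?thesis .
    next
      case 3
      then have "t powr r1 \<le> t powr x1" "t powr r2 \<le> t powr x1"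
        using N r by (auto intro: powr_mono)
      then have "a * t powr r1 + a * t powr r2 \<le> 2 * a * t powr x1"
        using a(1) by (simp add: mult_left_mono add_mono flip: mult_2 distrib_left)
      also have "\<dots> \<le> K1 * t powr x1" using a by (intro mult_right_mono) simp_all
      also have "\<dots> \<le> F t" using above_N[OF 3] .
      finally show ?thesis .
    qed
  qed
  moreover have "K_FxT (\<lambda>t. a * t powr r1 + a * t powr r2)"
    unfolding K_FxT_def using a r by blast
  ultimately show ?thesis by blast
qed

lemma K_FxT_below_continuous:
  fixes F :: "real \<Rightarrow> real"
  assumes cont: "continuous_on {0<..} F" and pos: "\<forall>t>0. F t > 0"
    and "K0 > 0" "x0 < 1" and near_0: "\<forall>\<^sub>F t in at_right 0. K0 * t powr x0 \<le> F t"
    and "K1 > 0" "x1 > 1" and near_top: "\<forall>\<^sub>F t in at_top. K1 * t powr x1 \<le> F t"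
  shows "\<exists>\<Psi>. K_FxT \<Psi> \<and> (\<forall>t>0. \<Psi> t \<le> F t)"
proof -
  obtain b where "b > 0" and below_b: "\<And>t. 0 < t \<Longrightarrow> t < b \<Longrightarrow> K0 * t powr x0 \<le> F t"
    using near_0 unfolding eventually_at_right_field by auto
  obtain N where above_N: "\<And>t. N \<le> t \<Longrightarrow> K1 * t powr x1 \<le> F t"
    using near_top unfolding eventually_at_top_linorder by auto
  define b' where "b' = min b 1"
  define N' where "N' = max N 1"
  have "{b'..N'} \<subseteq> {0<..}" using \<open>b > 0\<close> by (auto simp: b'_def)
  then have "continuous_on {b'..N'} F" "\<forall>t\<in>{b'..N'}. F t > 0"
    using continuous_on_subset[OF cont] pos by auto
  then obtain m where "m > 0" "\<forall>t\<in>{b'..N'}. m \<le> F t"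
    by (rule continuous_on_pos_lower_bound)
  then show ?thesis
    using \<open>b > 0\<close> below_b above_N \<open>K0 > 0\<close> \<open>x0 < 1\<close> \<open>K1 > 0\<close> \<open>x1 > 1\<close>
    by (intro K_FxT_below_piecewise[of b' N' K0 x0 K1 x1 m]) (auto simp: b'_def N'_def)
qed

lemma K_inf_pos:
  assumes "K_inf \<alpha>" "t > 0"
  shows "\<alpha> t > 0"
  using assms strict_mono_onD[of "{0..}" \<alpha> 0 t] unfolding K_inf_def by auto

lemma K_FxT_pos:
  assumes "K_FxT \<Psi>" "s > 0"
  shows "\<Psi> s > 0"
  using assms unfolding K_FxT_def by (auto intro!: add_pos_pos)

lemma K_FxT_continuous_on:
  assumes "K_FxT \<Psi>"
  shows "continuous_on {0<..} \<Psi>"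
proof -
  obtain c1 c2 p1 p2 where "\<forall>s\<ge>0. \<Psi> s = c1 * s powr p1 + c2 * s powr p2"
    using assms unfolding K_FxT_def by blast
  then have "continuous_on {0<..} (\<lambda>s. c1 * s powr p1 + c2 * s powr p2) = continuous_on {0<..} \<Psi>"
    by (intro continuous_on_cong) auto
  moreover have "continuous_on {0<..} (\<lambda>s::real. c1 * s powr p1 + c2 * s powr p2)"
    by (intro continuous_intros) auto
  ultimately show ?thesis by simp
qed

lemma K_P_powr_sum:
  assumes "K_P \<beta>"
  obtains E d where "finite E" "E \<noteq> {}" "\<forall>e\<in>E. e > 0 \<and> d e \<noteq> 0"
    and "\<forall>t\<ge>0. \<beta> t = (\<Sum>e\<in>E. d e * t powr e)"
proof -
  obtain n :: nat and c p where "\<forall>i<n. c i \<noteq> 0 \<and> p i > 0" and rep: "\<forall>t\<ge>0. \<beta> t = (\<Sum>i<n. c i * t powr p i)"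
    using assms unfolding K_P_def by blast
  then obtain E d where E: "finite E" "\<forall>e\<in>E. e > 0 \<and> d e \<noteq> 0"
    and "\<forall>t. (\<Sum>i<n. c i * t powr p i) = (\<Sum>e\<in>E. d e * t powr e)"
    using powr_sum_regroup_exponents[of n p c] by blast
  with rep have rep': "\<forall>t\<ge>0. \<beta> t = (\<Sum>e\<in>E. d e * t powr e)" by simp
  have "\<beta> 1 > 0" using assms K_inf_pos unfolding K_P_def by simp
  then have "E \<noteq> {}" using rep' by auto
  with E rep' show thesis by (intro that)
qed

lemma K_P_pos:
  assumes "K_P \<beta>" "t > 0"
  shows "\<beta> t > 0" and "deriv \<beta> t > 0"
  using assms K_inf_pos[of \<beta> t] unfolding K_P_def by blast+

lemma K_P_continuous_on:
  assumes "K_P \<beta>"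
  shows "continuous_on {0<..} \<beta>" and "continuous_on {0<..} (deriv \<beta>)"
proof -
  obtain E d where "finite E" "E \<noteq> {}" "\<forall>e\<in>E. e > 0 \<and> d e \<noteq> 0"
    and rep: "\<forall>t\<ge>0. \<beta> t = (\<Sum>e\<in>E. d e * t powr e)"
    by (rule K_P_powr_sum[OF assms])
  show "continuous_on {0<..} \<beta>"
    using powr_sum_has_real_derivative[OF rep]
    by (intro continuous_at_imp_continuous_on) (auto intro: DERIV_isCont)
  have "continuous_on {0<..} (\<lambda>t::real. \<Sum>e\<in>E. d e * e * t powr (e - 1))"
    by (intro continuous_intros) auto
  then show "continuous_on {0<..} (deriv \<beta>)"
    by (rule continuous_on_cong[THEN iffD1, rotated 2])
       (auto intro: DERIV_imp_deriv[OF powr_sum_has_real_derivative[OF rep], symmetric])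
qed

lemma K_P_ratio_bound_at_right_0:
  assumes "K_P \<beta>" "c > 0" "q > 0"
  shows "\<exists>K>0. \<exists>e>0. \<forall>\<^sub>F t in at_right 0. K * t powr (e * q - e + 1) \<le> c * \<beta> t powr q / deriv \<beta> t"
proof -
  obtain E d where fin: "finite E" "E \<noteq> {}" and coeffs: "\<forall>e\<in>E. e > 0 \<and> d e \<noteq> 0"
    and rep: "\<forall>t\<ge>0. \<beta> t = (\<Sum>e\<in>E. d e * t powr e)"
    by (rule K_P_powr_sum[OF assms(1)])
  note asymp = powr_sum_asymp_at_right_0[OF fin coeffs rep K_P_pos(1)[OF assms(1)]]
  have "Min E > 0" using fin coeffs by simp
  with asymp(1) have "d (Min E) * Min E > 0" by simp
  with \<open>Min E > 0\<close> show ?thesis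
    using eventually_powr_le_powr_div[OF asymp(2,3,1) _ assms(2,3) eventually_at_right_less[of 0]] by blast
qed

lemma K_P_ratio_bound_at_top:
  assumes "K_P \<beta>" "c > 0" "q > 0"
  shows "\<exists>K>0. \<exists>e>0. \<forall>\<^sub>F t in at_top. K * t powr (e * q - e + 1) \<le> c * \<beta> t powr q / deriv \<beta> t"
proof -
  obtain E d where fin: "finite E" "E \<noteq> {}" and coeffs: "\<forall>e\<in>E. e > 0 \<and> d e \<noteq> 0"
    and rep: "\<forall>t\<ge>0. \<beta> t = (\<Sum>e\<in>E. d e * t powr e)"
    by (rule K_P_powr_sum[OF assms(1)])
  note asymp = powr_sum_asymp_at_top[OF fin coeffs rep K_P_pos(1)[OF assms(1)]]
  have "Max E > 0" using fin coeffs by simp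
  with asymp(1) have "d (Max E) * Max E > 0" by simp
  with \<open>Max E > 0\<close> show ?thesis
    using eventually_powr_le_powr_div[OF asymp(2,3,1) _ assms(2,3) eventually_gt_at_top[of 0]] by blast
qed

lemma K_FxT_below_comp_div_deriv:
  assumes "K_P \<beta>" "K_FxT \<Psi>"
  shows "\<exists>\<Psi>'. K_FxT \<Psi>' \<and> (\<forall>t>0. \<Psi>' t \<le> \<Psi> (\<beta> t) / deriv \<beta> t)"
proof -
  obtain c1 c2 q1 q2 where c: "c1 > 0" "c2 > 0" "0 < q1" "q1 < 1" "q2 > 1"
    and \<Psi>: "\<forall>s\<ge>0. \<Psi> s = c1 * s powr q1 + c2 * s powr q2"
    using assms(2) unfolding K_FxT_def by blast
  define F where "F t = \<Psi> (\<beta> t) / deriv \<beta> t" for t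
  have F_ge: "c1 * \<beta> t powr q1 / deriv \<beta> t \<le> F t" "c2 * \<beta> t powr q2 / deriv \<beta> t \<le> F t"
    if "t > 0" for t
  proof -
    have "c1 * \<beta> t powr q1 \<le> \<Psi> (\<beta> t)" "c2 * \<beta> t powr q2 \<le> \<Psi> (\<beta> t)"
      using \<Psi> K_P_pos[OF assms(1) that] c by (simp_all add: less_imp_le)
    then show "c1 * \<beta> t powr q1 / deriv \<beta> t \<le> F t" "c2 * \<beta> t powr q2 / deriv \<beta> t \<le> F t"
      using K_P_pos[OF assms(1) that] unfolding F_def by (simp_all add: divide_right_mono less_imp_le)
  qed
  obtain K0 e0 where "K0 > 0" "e0 > 0" and near_0:
      "\<forall>\<^sub>F t in at_right 0. K0 * t powr (e0 * q1 - e0 + 1) \<le> c1 * \<beta> t powr q1 / deriv \<beta> t"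
    using K_P_ratio_bound_at_right_0[OF assms(1) c(1,3)] by blast
  obtain K1 e1 where "K1 > 0" "e1 > 0" and near_top:
      "\<forall>\<^sub>F t in at_top. K1 * t powr (e1 * q2 - e1 + 1) \<le> c2 * \<beta> t powr q2 / deriv \<beta> t"
    using K_P_ratio_bound_at_top[OF assms(1) c(2) order.strict_trans[OF zero_less_one c(5)]] by blast
  have "\<exists>\<Psi>'. K_FxT \<Psi>' \<and> (\<forall>t>0. \<Psi>' t \<le> F t)"
  proof (rule K_FxT_below_continuous)
    have "\<beta> ` {0<..} \<subseteq> {0<..}" "\<forall>t\<in>{0<..}. deriv \<beta> t \<noteq> 0"
      using K_P_pos[OF assms(1)] by force+
    then show "continuous_on {0<..} F"
      unfolding F_def
      by (intro continuous_on_divide continuous_on_compose2[OF K_FxT_continuous_on[OF assms(2)]]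
          K_P_continuous_on[OF assms(1)])
    show "\<forall>t>0. F t > 0" using K_FxT_pos[OF assms(2)] K_P_pos[OF assms(1)] by (simp add: F_def)
    show "e0 * q1 - e0 + 1 < 1" "e1 * q2 - e1 + 1 > 1" using \<open>e0 > 0\<close> \<open>e1 > 0\<close> c by simp_all
    show "\<forall>\<^sub>F t in at_right 0. K0 * t powr (e0 * q1 - e0 + 1) \<le> F t"
      using near_0 eventually_at_right_less[of 0] by eventually_elim (blast intro: order.trans F_ge)
    show "\<forall>\<^sub>F t in at_top. K1 * t powr (e1 * q2 - e1 + 1) \<le> F t"
      using near_top eventually_gt_at_top[of 0] by eventually_elim (blast intro: order.trans F_ge)
  qed fact+
  then show ?thesis by (simp add: F_def)
qed

lemma deriv_inverse_function_pos:
  fixes \<beta> \<gamma> :: "real \<Rightarrow> real"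
  assumes "continuous_on {0..} \<gamma>" "\<forall>s\<ge>0. \<beta> (\<gamma> s) = s" "s > 0"
    and "(\<beta> has_real_derivative D) (at (\<gamma> s))" "D \<noteq> 0"
  shows "deriv \<gamma> s = inverse D"
proof -
  have "isCont \<gamma> s"
    using assms(1,3) by (intro continuous_on_interior) (auto simp: interior_Ici[of "-1"])
  then have "(\<gamma> has_real_derivative inverse D) (at s)"
    using assms by (intro DERIV_inverse_function[where a = 0 and b = "s + 1"]) auto
  then show ?thesis by (rule DERIV_imp_deriv)
qed

theorem lemma6:
  fixes \<gamma> \<Psi> :: "real \<Rightarrow> real"
  assumes "K_P_inv \<gamma>" and "K_FxT \<Psi>"
  shows "\<exists>l::real. l \<ge> 1 \<and> (\<exists>\<Psi>'. K_FxT \<Psi>' \<and>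
           (\<forall>s>0. l * (\<gamma> s) powr (l - 1) * deriv \<gamma> s * \<Psi> s \<ge> \<Psi>' ((\<gamma> s) powr l)))"
proof -
  obtain \<beta> where "K_inf \<gamma>" "K_P \<beta>" and \<beta>_\<gamma>: "\<forall>s\<ge>0. \<beta> (\<gamma> s) = s"
    using assms(1) unfolding K_P_inv_def by blast
  obtain \<Psi>' where "K_FxT \<Psi>'" and \<Psi>': "\<forall>t>0. \<Psi>' t \<le> \<Psi> (\<beta> t) / deriv \<beta> t"
    using K_FxT_below_comp_div_deriv[OF \<open>K_P \<beta>\<close> assms(2)] by blast
  have "1 * (\<gamma> s) powr (1 - 1) * deriv \<gamma> s * \<Psi> s \<ge> \<Psi>' ((\<gamma> s) powr 1)" if "s > 0" for s
  proof -
    have "\<gamma> s > 0" using K_inf_pos[OF \<open>K_inf \<gamma>\<close> that] .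
    then have "\<beta> differentiable at (\<gamma> s)" "deriv \<beta> (\<gamma> s) > 0"
      using \<open>K_P \<beta>\<close> unfolding K_P_def by auto
    then have "deriv \<gamma> s = inverse (deriv \<beta> (\<gamma> s))"
      using \<open>K_inf \<gamma>\<close> \<beta>_\<gamma> that unfolding K_inf_def
      by (intro deriv_inverse_function_pos) (auto simp: DERIV_deriv_iff_real_differentiable)
    then show ?thesis
      using \<Psi>'[rule_format, OF \<open>\<gamma> s > 0\<close>] \<beta>_\<gamma> that \<open>\<gamma> s > 0\<close>
      by (simp add: divide_inverse mult.commute)
  qed
  with \<open>K_FxT \<Psi>'\<close> show ?thesis by (intro exI[of _ 1] conjI order_refl) blast
qed

end
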